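(* Let $0<b<a<n$, let $\ell\in\{-1,1\}^n$, and let $A$ be the adjacency matrix of $SBM(a/n,b/n)$ with communities labelled by $\ell$. Let $C=(\sqrt a-\sqrt b)^2$ and $L=\ell\ell^T$. Let $\kappa\ge1$ and $K\ge10^4$, and assume $C\ge10^4$. Define $\theta=\exp\big(-C/2+3\kappa+K\sqrt{a+b}\log R(a/n,b/n)\big)$. Then with probability at least $1-e^{-10\kappa}-1/n^2$, for all $x_1,\dots,x_n\in[0,1]$ with $x_1+\dots+x_n\le10^{-6}n$, \[ \Big\langle (A-D(a/n,b/n)J)\odot L,\ X\Big\rangle\ \ge\ \big(K(x_1+\dots+x_n)-\theta n\big)\sqrt{a+b}-\frac{\max\big(0,10^4(\kappa-\sqrt C)\big)}{\log R(a/n,b/n)}, \] where $X$ is the $n\times n$ matrix with $X_{ij}=x_i$.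
   Context: $SBM(a/n,b/n)$ with communities labelled by $\ell\in\{-1,1\}^n$: the adjacency matrix $A$ is symmetric with zero diagonal, and the entries $A_{ij}$, $i<j$, are independent Bernoulli with mean $a/n$ if $\ell_i=\ell_j$ and $b/n$ otherwise. $J$ is the all-ones matrix, $\odot$ is the entrywise (Hadamard) product, and $\langle X,Y\rangle=\sum_{i,j}X_{ij}Y_{ij}$. $R(p,q)=\frac{p(1-q)}{q(1-p)}$ and $D(p,q)=\log\frac{1-q}{1-p}\big/\log R(p,q)$. *)

theory Defs
  imports "HOL-Probability.Probability"
begin

definition R_ratio :: "real \<Rightarrow> real \<Rightarrow> real" where
  "R_ratio p q = (p * (1 - q)) / (q * (1 - p))"

definition D_thr :: "real \<Rightarrow> real \<Rightarrow> real" where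
  "D_thr p q = ln ((1 - q) / (1 - p)) / ln (R_ratio p q)"

text \<open>Vertices are 0..<n. The random object is the indicator of the edges
 {i,j} with i<j; the entries for i<j are independent Bernoulli with mean p_in
 if labels agree and p_out otherwise.\<close>

definition upper_pairs :: "nat \<Rightarrow> (nat \<times> nat) set" where
  "upper_pairs n = {(i, j). i < j \<and> j < n}"

definition SBM :: "nat \<Rightarrow> real \<Rightarrow> real \<Rightarrow> (nat \<Rightarrow> int) \<Rightarrow> (nat \<times> nat \<Rightarrow> bool) pmf" where
  "SBM n a b l = Pi_pmf (upper_pairs n) False
     (\<lambda>(i, j). bernoulli_pmf (if l i = l j then a / real n else b / real n))"

definition adj :: "(nat \<times> nat \<Rightarrow> bool) \<Rightarrow> nat \<Rightarrow> nat \<Rightarrow> real" where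
  "adj G i j = (if i < j then (if G (i, j) then 1 else 0)
                else if j < i then (if G (j, i) then 1 else 0) else 0)"

end

theory Submission
  imports Defs
begin

(* Write c_i for the i-th row sum of ((A - D J) o L), so that the left-hand side is sum_i x_i c_i.
   If the inequality fails for some fractional x, rounding x greedily produces a set S of at most
   10^-6 n vertices with sum_{i in S} (K sqrt(a+b) - c_i) > T. For a fixed S the sum of the c_i is
   a sum of independent edge terms; tilting by lambda = log R / 2 makes the exponential moment of
   an edge inside S equal to 1 and that of an edge leaving S equal to the Bhattacharyya coefficient
   sqrt(pq) + sqrt((1-p)(1-q)) <= exp(-(sqrt p - sqrt q)^2 / 2). Markov's inequality applied to the
   sum over all small S of these exponentials, together with binomial estimates, bounds the failure
   probability by exp(-10 kappa). *)

lemma fractional_sum_le_subset_sum: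
  fixes u x :: "nat \<Rightarrow> real"
  assumes "finite I" "\<forall>i\<in>I. 0 \<le> x i \<and> x i \<le> 1" "\<forall>i\<in>I. 0 \<le> u i"
    "(\<Sum>i\<in>I. x i) \<le> real k"
  shows "\<exists>S\<subseteq>I. card S \<le> k \<and> (\<Sum>i\<in>I. x i * u i) \<le> (\<Sum>i\<in>S. u i)"
  using assms
proof (induction k arbitrary: I x)
  case 0
  have "x i = 0" if "i \<in> I" for i
    using 0 that member_le_sum[of i I x] by force
  thus ?case by (intro exI[of _ "{}"]) auto
next
  case (Suc k)
  show ?case
  proof (cases "I = {}")
    case True
    thus ?thesis by (intro exI[of _ "{}"]) auto
  next
    case False
    \<comment> \<open>Take an index of largest weight into S and rescale the remaining fractions to total mass k.\<close>
    obtain i0 where i0: "i0 \<in> I" "\<forall>i\<in>I. u i \<le> u i0"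
      using Max_in[of "u ` I"] Max_ge[of "u ` I"] Suc.prems(1) False by fastforce
    define J where "J = I - {i0}"
    define \<sigma> where "\<sigma> = (\<Sum>i\<in>J. x i)"
    define r where "r = (if \<sigma> \<le> real k then 1 else real k / \<sigma>)"
    have finJ: "finite J" using Suc.prems(1) by (simp add: J_def)
    have sum_I: "(\<Sum>i\<in>I. x i) = x i0 + \<sigma>" "(\<Sum>i\<in>I. x i * u i) = x i0 * u i0 + (\<Sum>i\<in>J. x i * u i)"
      using Suc.prems(1) i0(1) by (simp_all add: \<sigma>_def J_def sum.remove)
    have \<sigma>_nonneg: "\<sigma> \<ge> 0" using Suc.prems(2) by (auto simp: \<sigma>_def J_def intro: sum_nonneg)
    have r: "0 \<le> r" "r \<le> 1" "r * \<sigma> \<le> real k" using \<sigma>_nonneg by (auto simp: r_def field_simps)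
    have rest: "(1 - r) * \<sigma> \<le> 1 - x i0"
      using Suc.prems(2,4) i0(1) \<sigma>_nonneg sum_I(1) by (auto simp: r_def field_simps)
    obtain S where S: "S \<subseteq> J" "card S \<le> k" "(\<Sum>i\<in>J. (r * x i) * u i) \<le> (\<Sum>i\<in>S. u i)"
      using Suc.IH[of J "\<lambda>i. r * x i"] finJ Suc.prems(2,3) r
      by (auto simp: J_def \<sigma>_def sum_distrib_left[symmetric] intro: mult_le_one)
    have "(1 - r) * (\<Sum>i\<in>J. x i * u i) \<le> (1 - r) * (\<Sum>i\<in>J. x i * u i0)"
      using Suc.prems(2) i0 r by (intro mult_left_mono sum_mono) (auto simp: J_def mult_left_mono)
    also have "\<dots> = ((1 - r) * \<sigma>) * u i0" by (simp add: \<sigma>_def sum_distrib_right)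
    also have "\<dots> \<le> (1 - x i0) * u i0" using rest Suc.prems(3) i0(1) by (intro mult_right_mono) auto
    finally have "(1 - r) * (\<Sum>i\<in>J. x i * u i) \<le> (1 - x i0) * u i0" .
    moreover have "(\<Sum>i\<in>J. x i * u i) = (\<Sum>i\<in>J. (r * x i) * u i) + (1 - r) * (\<Sum>i\<in>J. x i * u i)"
      by (simp add: sum_distrib_left algebra_simps sum.distrib[symmetric])
    ultimately have "(\<Sum>i\<in>J. x i * u i) \<le> (\<Sum>i\<in>S. u i) + (1 - x i0) * u i0"
      using S(3) by linarith
    hence "(\<Sum>i\<in>I. x i * u i) \<le> (\<Sum>i\<in>insert i0 S. u i)"
      using sum_I(2) S(1) finJ by (subst sum.insert) (auto simp: J_def algebra_simps dest: finite_subset)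
    thus ?thesis
      using S finJ i0(1) by (intro exI[of _ "insert i0 S"]) (auto simp: J_def card_insert_if dest: finite_subset)
  qed
qed

lemma exists_subset_sum_gt:
  fixes x c :: "nat \<Rightarrow> real"
  assumes "finite I" "\<forall>i\<in>I. 0 \<le> x i \<and> x i \<le> 1" "(\<Sum>i\<in>I. x i) \<le> real k"
    and "0 \<le> T" "T < (\<Sum>i\<in>I. x i * c i)"
  shows "\<exists>S\<subseteq>I. S \<noteq> {} \<and> card S \<le> k \<and> T < (\<Sum>i\<in>S. c i)"
proof -
  obtain S0 where S0: "S0 \<subseteq> I" "card S0 \<le> k" "(\<Sum>i\<in>I. x i * max 0 (c i)) \<le> (\<Sum>i\<in>S0. max 0 (c i))"
    using fractional_sum_le_subset_sum[of I x "\<lambda>i. max 0 (c i)" k] assms(1-3) by auto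
  define S where "S = {i\<in>S0. c i > 0}"
  have fin: "finite S0" using S0(1) assms(1) finite_subset by blast
  have "(\<Sum>i\<in>S0. max 0 (c i)) = (\<Sum>i\<in>S0. if c i > 0 then c i else 0)"
    by (intro sum.cong) auto
  also have "\<dots> = (\<Sum>i\<in>S. c i)"
    using fin by (simp add: S_def sum.inter_filter)
  finally have "(\<Sum>i\<in>S0. max 0 (c i)) = (\<Sum>i\<in>S. c i)" .
  moreover have "(\<Sum>i\<in>I. x i * c i) \<le> (\<Sum>i\<in>I. x i * max 0 (c i))"
    using assms(2) by (intro sum_mono mult_left_mono) auto
  ultimately have gt: "T < (\<Sum>i\<in>S. c i)" using assms(5) S0(3) by linarith
  hence "S \<noteq> {}" using assms(4) by auto
  moreover have "card S \<le> k" using S0(2) card_mono[OF fin, of S] by (auto simp: S_def)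
  moreover have "S \<subseteq> I" using S0(1) by (auto simp: S_def)
  ultimately show ?thesis using gt by blast
qed

definition signed_row_sum :: "nat \<Rightarrow> (nat \<Rightarrow> int) \<Rightarrow> real \<Rightarrow> (nat \<times> nat \<Rightarrow> bool) \<Rightarrow> nat \<Rightarrow> real" where
  "signed_row_sum n l D G i = (\<Sum>j<n. (adj G i j - D) * real_of_int (l i * l j))"

definition endpoints_in :: "nat set \<Rightarrow> nat \<times> nat \<Rightarrow> nat" where
  "endpoints_in S e = (if fst e \<in> S then 1 else 0) + (if snd e \<in> S then 1 else 0)"

lemma finite_upper_pairs [simp]: "finite (upper_pairs n)"
  by (rule finite_subset[of _ "{..<n} \<times> {..<n}"]) (auto simp: upper_pairs_def)

lemma sum_square_eq_sum_upper_pairs: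
  fixes f :: "nat \<Rightarrow> nat \<Rightarrow> real"
  shows "(\<Sum>i<n. \<Sum>j<n. f i j) =
     (\<Sum>e\<in>upper_pairs n. f (fst e) (snd e) + f (snd e) (fst e)) + (\<Sum>i<n. f i i)"
proof (induction n)
  case 0
  then show ?case by (simp add: upper_pairs_def)
next
  case (Suc n)
  have "upper_pairs (Suc n) = upper_pairs n \<union> (\<lambda>i. (i, n)) ` {..<n}"
    by (auto simp: upper_pairs_def)
  moreover have "upper_pairs n \<inter> (\<lambda>i. (i, n)) ` {..<n} = {}"
    by (auto simp: upper_pairs_def)
  moreover have "inj_on (\<lambda>i. (i, n)) {..<n}" by (auto simp: inj_on_def)
  ultimately have "(\<Sum>e\<in>upper_pairs (Suc n). f (fst e) (snd e) + f (snd e) (fst e)) =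
        (\<Sum>e\<in>upper_pairs n. f (fst e) (snd e) + f (snd e) (fst e)) + (\<Sum>i<n. f i n + f n i)"
    by (simp add: sum.union_disjoint sum.reindex)
  moreover have "(\<Sum>i<Suc n. \<Sum>j<Suc n. f i j) =
     (\<Sum>i<n. \<Sum>j<n. f i j) + (\<Sum>i<n. f i n + f n i) + f n n"
    by (simp add: sum.distrib)
  ultimately show ?case using Suc.IH by simp
qed

lemma sum_signed_row_sum_eq:
  fixes l :: "nat \<Rightarrow> int" and D :: real
  assumes l: "\<forall>i<n. l i \<in> {-1, 1}" and S: "S \<subseteq> {..<n}"
  shows "(\<Sum>i\<in>S. signed_row_sum n l D G i) = - D * real (card S) +
     (\<Sum>e\<in>upper_pairs n. real (endpoints_in S e) * ((if G e then 1 else 0) - D)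
        * real_of_int (l (fst e) * l (snd e)))"
proof -
  define F where "F i j = (adj G i j - D) * real_of_int (l i * l j)" for i j
  define f where "f i j = (if i \<in> S then F i j else 0)" for i j
  have "(\<Sum>i\<in>S. signed_row_sum n l D G i) = (\<Sum>i<n. if i \<in> S then signed_row_sum n l D G i else 0)"
    using S by (simp add: sum.If_cases Int_absorb1)
  also have "\<dots> = (\<Sum>i<n. \<Sum>j<n. f i j)"
    by (intro sum.cong) (simp_all add: f_def F_def signed_row_sum_def)
  also have "\<dots> = (\<Sum>e\<in>upper_pairs n. f (fst e) (snd e) + f (snd e) (fst e)) + (\<Sum>i<n. f i i)"
    by (rule sum_square_eq_sum_upper_pairs)
  also have "(\<Sum>i<n. f i i) = (\<Sum>i<n. if i \<in> S then - D else 0)"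
    using l by (intro sum.cong) (auto simp: f_def F_def adj_def)
  also have "\<dots> = - D * real (card S)"
    using S by (simp add: sum.If_cases Int_absorb1)
  also have "(\<Sum>e\<in>upper_pairs n. f (fst e) (snd e) + f (snd e) (fst e)) =
     (\<Sum>e\<in>upper_pairs n. real (endpoints_in S e) * ((if G e then 1 else 0) - D)
        * real_of_int (l (fst e) * l (snd e)))"
  proof (intro sum.cong refl)
    fix e assume e: "e \<in> upper_pairs n"
    then obtain i j where ij: "e = (i, j)" "i < j" by (auto simp: upper_pairs_def)
    have "F j i = F i j" by (simp add: F_def adj_def mult.commute)
    moreover have "F i j = ((if G e then 1 else 0) - D) * real_of_int (l i * l j)"
      using ij by (simp add: F_def adj_def)
    ultimately show "f (fst e) (snd e) + f (snd e) (fst e) = real (endpoints_in S e)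
        * ((if G e then 1 else 0) - D) * real_of_int (l (fst e) * l (snd e))"
      using ij by (simp add: f_def endpoints_in_def algebra_simps)
  qed
  finally show ?thesis by (simp add: add.commute)
qed

lemma card_mult_le_card_crossing_pairs:
  assumes S: "S \<subseteq> {..<n}"
  shows "card S * (n - card S) \<le> card {e\<in>upper_pairs n. endpoints_in S e = 1}"
proof -
  define h where "h = (\<lambda>(i::nat, j::nat). (min i j, max i j))"
  have "inj_on h (S \<times> ({..<n} - S))"
    unfolding inj_on_def h_def by (auto simp: min_def max_def split: if_splits)
  moreover have "h ` (S \<times> ({..<n} - S)) \<subseteq> {e\<in>upper_pairs n. endpoints_in S e = 1}"
    using S unfolding h_def endpoints_in_def upper_pairs_def
    by (auto simp: min_def max_def split: if_splits; metis le_neq_implies_less)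
  ultimately have "card (S \<times> ({..<n} - S)) \<le> card {e\<in>upper_pairs n. endpoints_in S e = 1}"
    by (intro card_inj_on_le) auto
  thus ?thesis
    using S by (simp add: card_cartesian_product card_Diff_subset finite_subset)
qed

lemma R_ratio_eq_mult:
  fixes p q :: real assumes "0 < q" "p < 1"
  shows "R_ratio p q = (p / q) * ((1 - q) / (1 - p))"
  using assms by (simp add: R_ratio_def field_simps)

lemma R_ratio_ge:
  fixes p q :: real assumes "0 < q" "q < p" "p < 1"
  shows "p / q \<le> R_ratio p q" "(1 - q) / (1 - p) \<le> R_ratio p q"
proof -
  have R: "R_ratio p q = (p / q) * ((1 - q) / (1 - p))" using assms by (simp add: R_ratio_eq_mult)
  have "p / q * 1 \<le> p / q * ((1 - q) / (1 - p))" using assms by (intro mult_left_mono) auto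
  thus "p / q \<le> R_ratio p q" by (simp only: R mult_1_right)
  have "1 * ((1 - q) / (1 - p)) \<le> p / q * ((1 - q) / (1 - p))" using assms by (intro mult_right_mono) auto
  thus "(1 - q) / (1 - p) \<le> R_ratio p q" by (simp only: R mult_1_left)
qed

lemma ln_R_ratio_pos:
  fixes p q :: real assumes "0 < q" "q < p" "p < 1"
  shows "ln (R_ratio p q) > 0"
proof -
  have "1 < p / q" using assms by simp
  thus ?thesis using R_ratio_ge(1)[OF assms] by simp
qed

lemma D_thr_le_one:
  fixes p q :: real assumes "0 < q" "q < p" "p < 1"
  shows "D_thr p q \<le> 1"
proof -
  have "0 < (1 - q) / (1 - p)" using assms by simp
  hence "ln ((1 - q) / (1 - p)) \<le> ln (R_ratio p q)"
    using R_ratio_ge(2)[OF assms] by (subst ln_le_cancel_iff) auto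
  thus ?thesis using ln_R_ratio_pos[OF assms] by (simp add: D_thr_def divide_le_eq_1)
qed

lemma exp_ln_R_ratio_D_thr:
  fixes p q :: real assumes pq: "0 < q" "q < p" "p < 1"
  defines "L \<equiv> ln (R_ratio p q)" and "D \<equiv> D_thr p q"
  shows "exp (L * D) = (1 - q) / (1 - p)" "exp (- L * (1 - D)) = q / p"
proof -
  have "0 < p / q" using pq by simp
  hence L: "L > 0" "exp L = R_ratio p q"
    using ln_R_ratio_pos[OF pq] R_ratio_ge(1)[OF pq] by (auto simp: L_def)
  hence "L * D = ln ((1 - q) / (1 - p))" by (simp add: D_def D_thr_def L_def)
  thus e: "exp (L * D) = (1 - q) / (1 - p)" using pq by simp
  have "exp (- L * (1 - D)) = exp (L * D) / exp L" by (simp add: algebra_simps flip: exp_diff)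
  thus "exp (- L * (1 - D)) = q / p" using pq by (simp add: e L(2) R_ratio_eq_mult)
qed

lemma exp_half_eq_sqrt_exp: "exp (x / 2) = sqrt (exp x)"
proof -
  have "exp x = exp (x / 2) ^ 2" by (simp flip: exp_of_nat_mult)
  thus ?thesis by simp
qed

lemma bhattacharyya_le_exp:
  fixes p q :: real assumes "0 \<le> p" "p \<le> 1" "0 \<le> q" "q \<le> 1"
  shows "sqrt (p * q) + sqrt ((1 - p) * (1 - q)) \<le> exp (- ((sqrt p - sqrt q)^2) / 2)"
proof -
  have "sqrt ((1 - p) * (1 - q)) \<le> ((1 - p) + (1 - q)) / 2"
    using assms arith_geo_mean_sqrt[of "1 - p" "1 - q"] by simp
  moreover have "(sqrt p - sqrt q)^2 = p + q - 2 * sqrt (p * q)"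
    using assms by (simp add: power2_diff real_sqrt_mult)
  ultimately have "sqrt (p * q) + sqrt ((1 - p) * (1 - q)) \<le> 1 + (- ((sqrt p - sqrt q)^2) / 2)"
    by (simp add: field_simps)
  also have "\<dots> \<le> exp (- ((sqrt p - sqrt q)^2) / 2)"
    using exp_ge_add_one_self[of "- ((sqrt p - sqrt q)^2) / 2"] by (simp add: add.commute)
  finally show ?thesis .
qed

lemma two_point_sqrt_tilt_eq:
  fixes P Q :: real assumes "0 < P" "P < 1" "0 < Q" "Q < 1" "m \<le> 2"
  shows "sqrt (Q / P) ^ m * P + sqrt ((1 - Q) / (1 - P)) ^ m * (1 - P)
       = (if m = 1 then sqrt (P * Q) + sqrt ((1 - P) * (1 - Q)) else 1)"
proof -
  have sqrt_ratio: "sqrt (y / x) * x = sqrt (x * y)" if "0 < x" for x y :: real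
  proof -
    have "sqrt (y / x) * x = sqrt (y / x) * sqrt x * sqrt x" using that by (simp add: mult.assoc)
    also have "\<dots> = sqrt y * sqrt x" using that by (simp add: real_sqrt_divide)
    finally show ?thesis by (simp add: real_sqrt_mult mult.commute)
  qed
  have "m = 0 \<or> m = 1 \<or> m = 2" using assms(5) by auto
  thus ?thesis
    using assms sqrt_ratio[of P Q] sqrt_ratio[of "1 - P" "1 - Q"] by (auto simp: power2_eq_square)
qed

lemma bernoulli_tilt_expectation:
  fixes p q s :: real and m :: nat
  assumes pq: "0 < q" "q < p" "p < 1" and m: "m \<le> 2" and s: "s = 1 \<or> s = -1"
  defines "L \<equiv> ln (R_ratio p q)" and "D \<equiv> D_thr p q"
  shows "measure_pmf.expectation (bernoulli_pmf (if s = 1 then p else q))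
      (\<lambda>x. exp (- (L/2) * real m * ((if x then 1 else 0) - D) * s))
    = (if m = 1 then sqrt (p * q) + sqrt ((1 - p) * (1 - q)) else 1)"
proof -
  note e = exp_ln_R_ratio_D_thr[OF pq, folded L_def D_def]
  define P where "P = (if s = 1 then p else q)"
  define Q where "Q = (if s = 1 then q else p)"
  have half: "exp (- (L/2) * (y - D) * s) = sqrt (exp (- L * (y - D) * s))" for y
  proof -
    have "- (L/2) * (y - D) * s = (- L * (y - D) * s) / 2" by simp
    thus ?thesis by (simp only: exp_half_eq_sqrt_exp)
  qed
  have "exp (- L * (1 - D) * s) = Q / P \<and> exp (- L * (0 - D) * s) = (1 - Q) / (1 - P)"
    using s
  proof
    assume "s = 1"
    thus ?thesis using e by (simp add: P_def Q_def)
  next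
    assume s: "s = -1"
    have "exp (- L * (1 - D) * s) = inverse (exp (- L * (1 - D)))"
      "exp (- L * (0 - D) * s) = inverse (exp (L * D))"
      unfolding s by (subst exp_minus[symmetric], simp)+
    thus ?thesis using e s by (simp add: P_def Q_def)
  qed
  hence tilt: "exp (- (L/2) * (1 - D) * s) = sqrt (Q / P)" "exp (- (L/2) * (0 - D) * s) = sqrt ((1 - Q) / (1 - P))"
    by (simp_all only: half)
  have pow: "exp (- (L/2) * real m * (y - D) * s) = exp (- (L/2) * (y - D) * s) ^ m" for y
    by (simp add: mult_ac flip: exp_of_nat_mult)
  have "0 \<le> P" "P \<le> 1" using pq by (auto simp: P_def)
  hence "measure_pmf.expectation (bernoulli_pmf P) (\<lambda>x. exp (- (L/2) * real m * ((if x then 1 else 0) - D) * s))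
      = exp (- (L/2) * real m * (1 - D) * s) * P + exp (- (L/2) * real m * (0 - D) * s) * (1 - P)"
    by (subst integral_bernoulli_pmf) auto
  also have "\<dots> = sqrt (Q / P) ^ m * P + sqrt ((1 - Q) / (1 - P)) ^ m * (1 - P)"
    by (simp only: pow tilt)
  also have "\<dots> = (if m = 1 then sqrt (P * Q) + sqrt ((1 - P) * (1 - Q)) else 1)"
    using pq m by (intro two_point_sqrt_tilt_eq) (auto simp: P_def Q_def)
  also have "sqrt (P * Q) + sqrt ((1 - P) * (1 - Q)) = sqrt (p * q) + sqrt ((1 - p) * (1 - q))"
    by (auto simp: P_def Q_def mult.commute)
  finally show ?thesis unfolding P_def .
qed

lemma finite_set_pmf_SBM: "finite (set_pmf (SBM n a b l))"
  unfolding SBM_def by (rule finite_subset[OF set_Pi_pmf_subset']) auto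

lemma integrable_SBM [simp]: "integrable (measure_pmf (SBM n a b l)) (f :: _ \<Rightarrow> real)"
  by (rule integrable_measure_pmf_finite[OF finite_set_pmf_SBM])

lemma exp_mult_sum_signed_row_sum:
  fixes c D :: real
  assumes l: "\<forall>i<n. l i \<in> {-1, 1}" and S: "S \<subseteq> {..<n}"
  shows "exp (c * (\<Sum>i\<in>S. signed_row_sum n l D G i)) = exp (- c * D * real (card S)) *
     (\<Prod>e\<in>upper_pairs n. exp (c * real (endpoints_in S e) * ((if G e then 1 else 0) - D)
        * real_of_int (l (fst e) * l (snd e))))"
proof -
  have "(\<Sum>e\<in>upper_pairs n. c * real (endpoints_in S e) * ((if G e then 1 else 0) - D)
          * real_of_int (l (fst e) * l (snd e)))
      = c * (\<Sum>e\<in>upper_pairs n. real (endpoints_in S e) * ((if G e then 1 else 0) - D)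
          * real_of_int (l (fst e) * l (snd e)))"
    by (simp add: sum_distrib_left mult.assoc)
  hence "c * (\<Sum>i\<in>S. signed_row_sum n l D G i) = - c * D * real (card S)
      + (\<Sum>e\<in>upper_pairs n. c * real (endpoints_in S e) * ((if G e then 1 else 0) - D)
          * real_of_int (l (fst e) * l (snd e)))"
    by (simp add: sum_signed_row_sum_eq[OF l S] algebra_simps)
  thus ?thesis by (simp only: exp_add exp_sum[OF finite_upper_pairs])
qed

lemma SBM_expectation_exp_sum_signed_row_sum_le:
  fixes n :: nat and a b :: real and l :: "nat \<Rightarrow> int"
  assumes ab: "0 < b" "b < a" "a < real n" and l: "\<forall>i<n. l i \<in> {-1, 1}" and S: "S \<subseteq> {..<n}"
  defines "p \<equiv> a / real n" and "q \<equiv> b / real n"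
  defines "L \<equiv> ln (R_ratio p q)" and "D \<equiv> D_thr p q"
  shows "measure_pmf.expectation (SBM n a b l) (\<lambda>G. exp (- (L/2) * (\<Sum>i\<in>S. signed_row_sum n l D G i)))
   \<le> exp ((L/2) * D * real (card S)
          - real (card S) * (real n - real (card S)) * (sqrt a - sqrt b)^2 / (2 * real n))"
proof -
  have npos: "real n > 0" using ab by simp
  have pq: "0 < q" "q < p" "p < 1" using ab npos by (auto simp: p_def q_def field_simps)
  define k where "k = card S"
  define s where "s e = real_of_int (l (fst e) * l (snd e))" for e :: "nat \<times> nat"
  define f where "f e x = exp (- (L/2) * real (endpoints_in S e) * ((if x then 1 else 0) - D) * s e)" for e x
  define \<beta> where "\<beta> = sqrt (p * q) + sqrt ((1 - p) * (1 - q))"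
  have s: "s e = 1 \<or> s e = -1" "bernoulli_pmf (if l (fst e) = l (snd e) then a / real n else b / real n)
      = bernoulli_pmf (if s e = 1 then p else q)" if e: "e \<in> upper_pairs n" for e
  proof -
    obtain i j where ij: "e = (i, j)" "i < n" "j < n" using e by (auto simp: upper_pairs_def)
    hence "l i = -1 \<or> l i = 1" "l j = -1 \<or> l j = 1" using l by auto
    thus "s e = 1 \<or> s e = -1" "bernoulli_pmf (if l (fst e) = l (snd e) then a / real n else b / real n)
      = bernoulli_pmf (if s e = 1 then p else q)"
      using ij by (auto simp: s_def p_def q_def)
  qed
  have "exp (- (L/2) * (\<Sum>i\<in>S. signed_row_sum n l D G i))
      = exp ((L/2) * D * real k) * (\<Prod>e\<in>upper_pairs n. f e (G e))" for G
    using exp_mult_sum_signed_row_sum[OF l S, of "- (L/2)" D G] by (simp add: f_def s_def k_def)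
  hence "measure_pmf.expectation (SBM n a b l) (\<lambda>G. exp (- (L/2) * (\<Sum>i\<in>S. signed_row_sum n l D G i)))
     = exp ((L/2) * D * real k) * measure_pmf.expectation (SBM n a b l) (\<lambda>G. \<Prod>e\<in>upper_pairs n. f e (G e))"
    by simp
  also have "measure_pmf.expectation (SBM n a b l) (\<lambda>G. \<Prod>e\<in>upper_pairs n. f e (G e))
     = (\<Prod>e\<in>upper_pairs n. measure_pmf.expectation (bernoulli_pmf (if s e = 1 then p else q)) (f e))"
    unfolding SBM_def
    by (subst expectation_prod_Pi_pmf)
      (auto intro!: prod.cong integrable_measure_pmf_finite simp: f_def case_prod_beta s(2))
  also have "\<dots> = (\<Prod>e\<in>upper_pairs n. if endpoints_in S e = 1 then \<beta> else 1)"
    using pq s(1) unfolding f_def \<beta>_def L_def D_def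
    by (intro prod.cong refl bernoulli_tilt_expectation) (auto simp: endpoints_in_def)
  also have "\<dots> = \<beta> ^ card {e\<in>upper_pairs n. endpoints_in S e = 1}"
    by (simp add: prod.If_cases Int_def)
  also have "\<dots> \<le> \<beta> ^ (k * (n - k))"
  proof (rule power_decreasing)
    show "k * (n - k) \<le> card {e\<in>upper_pairs n. endpoints_in S e = 1}"
      using card_mult_le_card_crossing_pairs[OF S] by (simp add: k_def)
    have "\<beta> \<le> exp (- ((sqrt p - sqrt q)^2) / 2)"
      unfolding \<beta>_def using pq by (intro bhattacharyya_le_exp) auto
    thus "\<beta> \<le> 1" using order_trans by fastforce
    show "0 \<le> \<beta>" using pq by (simp add: \<beta>_def)
  qed
  also have "\<dots> \<le> exp (- ((sqrt p - sqrt q)^2) / 2) ^ (k * (n - k))"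
    unfolding \<beta>_def using pq by (intro power_mono bhattacharyya_le_exp) auto
  also have "\<dots> = exp (- real k * (real n - real k) * (sqrt a - sqrt b)^2 / (2 * real n))"
  proof -
    have "k \<le> n" using card_mono[OF _ S] by (simp add: k_def)
    moreover have "(sqrt p - sqrt q)^2 = (sqrt a - sqrt b)^2 / real n"
      using npos ab by (simp add: p_def q_def real_sqrt_divide power2_eq_square field_simps)
    ultimately show ?thesis using npos by (simp add: field_simps flip: exp_of_nat_mult)
  qed
  finally show ?thesis by (simp add: k_def mult_left_mono flip: exp_add)
qed

lemma binomial_le_exp_mult_pow:
  assumes "0 < k" "k \<le> n"
  shows "real (n choose k) \<le> (exp 1 * real n / real k) ^ k"
proof -
  define y where "y = real k / real n"
  have y: "0 < y" using assms by (simp add: y_def)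
  have "real (n choose k) * y ^ k * 1 ^ (n - k) \<le> (\<Sum>j\<le>n. real (n choose j) * y ^ j * 1 ^ (n - j))"
    using assms y by (intro member_le_sum) auto
  also have "\<dots> = (y + 1) ^ n" by (rule binomial_ring[symmetric])
  also have "\<dots> \<le> exp y ^ n"
    using y exp_ge_add_one_self[of y] by (intro power_mono) (auto simp: add.commute)
  also have "\<dots> = exp 1 ^ k" using assms by (simp add: y_def flip: exp_of_nat_mult)
  finally have bound: "real (n choose k) * y ^ k \<le> exp 1 ^ k" by simp
  have "real (n choose k) = real (n choose k) * y ^ k * (1 / y) ^ k"
    using y by (simp add: power_one_over)
  also have "\<dots> \<le> exp 1 ^ k * (1 / y) ^ k"
    using bound y by (intro mult_right_mono) auto
  also have "\<dots> = (exp 1 * real n / real k) ^ k"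
    by (simp add: y_def flip: power_mult_distrib)
  finally show ?thesis .
qed

lemma exp_one_mult_exp_neg_half_le:
  fixes P :: real assumes "100 \<le> P"
  shows "exp 1 * P * exp (- P / 2) \<le> 1 / 2"
proof -
  have "1 + P/2 + (P/2)^2/2 \<le> exp (P/2)" using assms by (intro exp_lower_Taylor_quadratic) auto
  moreover have "2 * 3 * P \<le> (P/2)^2/2" using assms by (simp add: power2_eq_square field_simps)
  moreover have "2 * exp 1 * P \<le> 2 * 3 * P" using assms exp_le by (intro mult_right_mono) auto
  ultimately have "2 * exp 1 * P \<le> exp (P/2)" using assms by linarith
  thus ?thesis by (simp add: exp_minus field_simps)
qed

lemma binomial_mult_exp_le:
  fixes P :: real assumes k: "0 < k" "100 * k \<le> n"
  shows "real (n choose k) * exp (- real k * (1 - real k / real n) * P)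
    \<le> real (n choose k) * exp (1 - P) ^ k + (1/2) ^ k"
proof (cases "real k * P \<le> real n")
  case True
  have "real k * (real k * P / real n) \<le> real k * 1"
    using True k by (intro mult_left_mono) (auto simp: field_simps)
  hence "exp (- real k * (1 - real k / real n) * P) \<le> exp (1 - P) ^ k"
    by (simp add: algebra_simps flip: exp_of_nat_mult)
  hence "real (n choose k) * exp (- real k * (1 - real k / real n) * P) \<le> real (n choose k) * exp (1 - P) ^ k"
    by (intro mult_left_mono) auto
  thus ?thesis by (simp add: add_increasing2)
next
  case False
  \<comment> \<open>Here P > n/k \<ge> 100, and the binomial coefficient is beaten by the exponential.\<close>
  hence "real n / real k < P" using k by (simp add: divide_less_eq mult.commute)
  moreover have "100 \<le> real n / real k" using k by (simp add: le_divide_eq)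
  ultimately have P: "real n / real k < P" "100 \<le> P" by auto
  have "real (n choose k) \<le> (exp 1 * P) ^ k"
  proof -
    have "real (n choose k) \<le> (exp 1 * real n / real k) ^ k"
      using k by (intro binomial_le_exp_mult_pow) auto
    also have "\<dots> \<le> (exp 1 * P) ^ k"
      using P(1) k by (intro power_mono) (auto simp: field_simps)
    finally show ?thesis .
  qed
  moreover have "exp (- real k * (1 - real k / real n) * P) \<le> exp (- P / 2) ^ k"
  proof -
    have "real k / real n \<le> 1/2" using k by (simp add: field_simps)
    hence "(1/2) * P \<le> (1 - real k / real n) * P" using P(2) by (intro mult_right_mono) auto
    hence "real k * (P / 2) \<le> real k * ((1 - real k / real n) * P)" by (intro mult_left_mono) auto
    hence "exp (- (real k * ((1 - real k / real n) * P))) \<le> exp (- (real k * (P / 2)))" by simp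
    moreover have "exp (- P / 2) ^ k = exp (- (real k * (P / 2)))" by (simp flip: exp_of_nat_mult)
    ultimately show ?thesis by (simp only: mult_minus_left mult.assoc)
  qed
  ultimately have "real (n choose k) * exp (- real k * (1 - real k / real n) * P)
      \<le> (exp 1 * P * exp (- P / 2)) ^ k"
    unfolding power_mult_distrib using P(2) by (intro mult_mono) auto
  also have "\<dots> \<le> (1/2) ^ k"
    using P(2) exp_one_mult_exp_neg_half_le[of P] by (intro power_mono) auto
  finally show ?thesis by (simp add: add_increasing)
qed

lemma binomial_tail_exponent_le:
  fixes Lam mu C :: real
  assumes k: "1 \<le> k" "100 * k \<le> n" and Lam: "0 \<le> Lam" and mu: "mu \<le> Lam / 10^6"
  shows "real k * (Lam + mu) - real k * (real n - real k) * C / (2 * real n)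
    \<le> - (49/100) * Lam - real k * (1 - real k / real n) * (C/2 - 2 * Lam)"
proof -
  define r where "r = real k / real n"
  have r: "0 \<le> r" "r \<le> 1/100" using k by (auto simp: r_def field_simps)
  have "real k * (real n - real k) * C / (2 * real n) = real k * (1 - r) * C / 2"
    using k by (simp add: r_def field_simps)
  hence "real k * (Lam + mu) - real k * (real n - real k) * C / (2 * real n)
      = real k * Lam + real k * mu - 2 * ((1 - r) * (real k * Lam)) - real k * (1 - r) * (C/2 - 2 * Lam)"
    by (simp add: algebra_simps)
  moreover have "real k * mu \<le> (real k * Lam) / 1000000" using mu k by (simp add: mult_left_mono)
  moreover have "(99/100) * (real k * Lam) \<le> (1 - r) * (real k * Lam)"
    using r Lam k by (intro mult_right_mono) auto
  moreover have "Lam \<le> real k * Lam" using k Lam by (simp add: mult_le_cancel_right1)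
  ultimately have "real k * (Lam + mu) - real k * (real n - real k) * C / (2 * real n)
      \<le> - (49/100) * Lam - real k * (1 - r) * (C/2 - 2 * Lam)"
    using Lam by linarith
  thus ?thesis by (simp only: r_def)
qed

lemma sum_binomial_pow_le:
  fixes w :: real assumes "0 \<le> w" "k0 \<le> n"
  shows "(\<Sum>k\<in>{1..k0}. real (n choose k) * w ^ k) \<le> (1 + w) ^ n - 1"
proof -
  have "(\<Sum>k\<in>{1..k0}. real (n choose k) * w ^ k) \<le> (\<Sum>k\<in>{1..n}. real (n choose k) * w ^ k)"
    using assms by (intro sum_mono2) auto
  moreover have "{..n} = insert 0 {1..n}" by auto
  hence "(\<Sum>k\<le>n. real (n choose k) * w ^ k) = (\<Sum>k\<in>{1..n}. real (n choose k) * w ^ k) + 1"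
    by (simp add: add.commute)
  moreover have "(\<Sum>k\<le>n. real (n choose k) * w ^ k) = (w + 1) ^ n"
    by (subst binomial_ring) simp
  ultimately show ?thesis by (simp add: add.commute)
qed

lemma sum_binomial_exp_le:
  fixes n k0 :: nat and Lam mu C Y :: real
  assumes k0: "100 * k0 \<le> n" and Lam: "0 \<le> Lam" and mu: "mu \<le> Lam / 10^6"
    and Y: "exp 1 * real n * exp (- (C/2 - 2 * Lam)) \<le> Y"
  shows "(\<Sum>k\<in>{1..k0}. real (n choose k) *
            exp (real k * (Lam + mu) - real k * (real n - real k) * C / (2 * real n)))
         \<le> exp (- (49/100) * Lam + Y)"
proof -
  define P where "P = C/2 - 2 * Lam"
  define w where "w = exp (1 - P)"
  have summand: "real (n choose k) * exp (real k * (Lam + mu) - real k * (real n - real k) * C / (2 * real n))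
      \<le> exp (- (49/100) * Lam) * (real (n choose k) * w ^ k + (1/2) ^ k)" if "k \<in> {1..k0}" for k
  proof -
    have k: "1 \<le> k" "100 * k \<le> n" using that k0 by auto
    have "exp (real k * (Lam + mu) - real k * (real n - real k) * C / (2 * real n))
        \<le> exp (- (49/100) * Lam) * exp (- real k * (1 - real k / real n) * P)"
      using binomial_tail_exponent_le[OF k Lam mu, of C] by (simp add: P_def flip: exp_add)
    hence "real (n choose k) * exp (real k * (Lam + mu) - real k * (real n - real k) * C / (2 * real n))
        \<le> exp (- (49/100) * Lam) * (real (n choose k) * exp (- real k * (1 - real k / real n) * P))"
      by (simp add: mult_left_mono mult.left_commute)
    also have "\<dots> \<le> exp (- (49/100) * Lam) * (real (n choose k) * w ^ k + (1/2) ^ k)"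
      using k binomial_mult_exp_le[of k n P, folded w_def] by (intro mult_left_mono) auto
    finally show ?thesis .
  qed
  have w: "0 \<le> w" by (simp add: w_def)
  have geom: "(\<Sum>k\<in>{1..k0}. (1/2::real) ^ k) \<le> 1"
  proof -
    have "(\<Sum>k\<in>{1..m}. (1/2::real) ^ k) = 1 - (1/2) ^ m" for m
      by (induction m) (auto simp: field_simps)
    thus ?thesis by simp
  qed
  have "(\<Sum>k\<in>{1..k0}. real (n choose k) * w ^ k) + (\<Sum>k\<in>{1..k0}. (1/2) ^ k) \<le> (1 + w) ^ n"
    using sum_binomial_pow_le[OF w, of k0 n] k0 geom by simp
  also have "\<dots> \<le> exp w ^ n"
    using w exp_ge_add_one_self[of w] by (intro power_mono) (auto simp: add.commute)
  also have "\<dots> = exp (real n * w)" by (simp flip: exp_of_nat_mult)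
  also have "\<dots> \<le> exp Y"
  proof -
    have "w = exp 1 * exp (- (C/2 - 2 * Lam))" by (simp add: w_def P_def flip: exp_add)
    thus ?thesis using Y by (simp add: mult.assoc mult.left_commute)
  qed
  finally have bracket: "(\<Sum>k\<in>{1..k0}. real (n choose k) * w ^ k) + (\<Sum>k\<in>{1..k0}. (1/2) ^ k) \<le> exp Y" .
  have "(\<Sum>k\<in>{1..k0}. real (n choose k) *
            exp (real k * (Lam + mu) - real k * (real n - real k) * C / (2 * real n)))
      \<le> (\<Sum>k\<in>{1..k0}. exp (- (49/100) * Lam) * (real (n choose k) * w ^ k + (1/2) ^ k))"
    by (rule sum_mono) (rule summand)
  also have "\<dots> = exp (- (49/100) * Lam) * ((\<Sum>k\<in>{1..k0}. real (n choose k) * w ^ k) + (\<Sum>k\<in>{1..k0}. (1/2) ^ k))"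
    by (simp only: sum.distrib flip: sum_distrib_left)
  also have "\<dots> \<le> exp (- (49/100) * Lam) * exp Y"
    using bracket by (intro mult_left_mono) auto
  finally show ?thesis by (simp only: exp_add)
qed

lemma sum_subsets_by_card:
  fixes g :: "nat \<Rightarrow> real"
  assumes "finite U"
  shows "(\<Sum>S\<in>{S. S \<subseteq> U \<and> 1 \<le> card S \<and> card S \<le> k0}. g (card S))
       = (\<Sum>k\<in>{1..k0}. real (card U choose k) * g k)"
proof -
  define SS where "SS = {S. S \<subseteq> U \<and> 1 \<le> card S \<and> card S \<le> k0}"
  have "finite SS" using assms by (auto simp: SS_def intro: finite_subset[of _ "Pow U"])
  moreover have "card ` SS \<subseteq> {1..k0}" by (auto simp: SS_def)
  ultimately have "(\<Sum>S\<in>SS. g (card S)) = (\<Sum>k\<in>{1..k0}. \<Sum>S\<in>{S\<in>SS. card S = k}. g (card S))"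
    using sum.group[of SS "{1..k0}" card "\<lambda>S. g (card S)"] by simp
  also have "\<dots> = (\<Sum>k\<in>{1..k0}. real (card U choose k) * g k)"
  proof (intro sum.cong refl)
    fix k assume "k \<in> {1..k0}"
    hence "{S\<in>SS. card S = k} = {S. S \<subseteq> U \<and> card S = k}" by (auto simp: SS_def)
    thus "(\<Sum>S\<in>{S\<in>SS. card S = k}. g (card S)) = real (card U choose k) * g k"
      using n_subsets[OF assms, of k] by simp
  qed
  finally show ?thesis by (simp add: SS_def)
qed

lemma prob_exists_gt_le_sum_expectation_exp:
  fixes M :: "'a pmf" and f :: "'b \<Rightarrow> 'a \<Rightarrow> real"
  assumes "finite SS" "0 < lam" "\<And>S. S \<in> SS \<Longrightarrow> integrable (measure_pmf M) (\<lambda>x. exp (lam * f S x))"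
  shows "measure_pmf.prob M {x. \<exists>S\<in>SS. T < f S x}
    \<le> (\<Sum>S\<in>SS. measure_pmf.expectation M (\<lambda>x. exp (lam * f S x))) / exp (lam * T)"
proof -
  define Z where "Z x = (\<Sum>S\<in>SS. exp (lam * f S x))" for x
  have "{x. \<exists>S\<in>SS. T < f S x} \<subseteq> {x. exp (lam * T) \<le> Z x}"
  proof safe
    fix x S assume "S \<in> SS" "T < f S x"
    hence "exp (lam * T) \<le> exp (lam * f S x)" using assms(2) by simp
    also have "\<dots> \<le> Z x" unfolding Z_def using assms(1) \<open>S \<in> SS\<close> by (intro member_le_sum) auto
    finally show "exp (lam * T) \<le> Z x" .
  qed
  hence "measure_pmf.prob M {x. \<exists>S\<in>SS. T < f S x} \<le> measure_pmf.prob M {x. exp (lam * T) \<le> Z x}"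
    by (intro measure_pmf.finite_measure_mono) auto
  also have "\<dots> \<le> measure_pmf.expectation M Z / exp (lam * T)"
  proof -
    have "integrable (measure_pmf M) Z" unfolding Z_def using assms(3) by (rule Bochner_Integration.integrable_sum)
    moreover have "0 \<le> Z x" for x by (simp add: Z_def sum_nonneg)
    ultimately show ?thesis using integral_Markov_inequality_measure[of M Z UNIV "exp (lam * T)"] by simp
  qed
  also have "measure_pmf.expectation M Z = (\<Sum>S\<in>SS. measure_pmf.expectation M (\<lambda>x. exp (lam * f S x)))"
    unfolding Z_def using assms(3) by (rule Bochner_Integration.integral_sum)
  finally show ?thesis .
qed

lemma SBM_prob_exists_heavy_subset_le:
  fixes n k0 :: nat and a b t T Y :: real and l :: "nat \<Rightarrow> int"
  assumes ab: "0 < b" "b < a" "a < real n" and l: "\<forall>i<n. l i \<in> {-1, 1}" and k0: "100 * k0 \<le> n"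
  defines "L \<equiv> ln (R_ratio (a / real n) (b / real n))" and "D \<equiv> D_thr (a / real n) (b / real n)"
  assumes t: "0 \<le> t" "D \<le> t / 10^6"
    and Y: "exp 1 * real n * exp (- ((sqrt a - sqrt b)^2 / 2 - L * t)) \<le> Y"
  shows "measure_pmf.prob (SBM n a b l)
      {G. \<exists>S\<subseteq>{..<n}. S \<noteq> {} \<and> card S \<le> k0 \<and> T < (\<Sum>i\<in>S. t - signed_row_sum n l D G i)}
    \<le> exp (- (49/100) * (L/2 * t) + Y - L/2 * T)"
proof -
  have "0 < real n" using ab by simp
  hence "L > 0" using ab by (auto simp: L_def field_simps intro!: ln_R_ratio_pos)
  define lam where "lam = L / 2"
  have lam: "lam > 0" using \<open>L > 0\<close> by (simp add: lam_def)
  define SS where "SS = {S. S \<subseteq> {..<n} \<and> 1 \<le> card S \<and> card S \<le> k0}"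
  have finSS: "finite SS" by (auto simp: SS_def intro: finite_subset[of _ "Pow {..<n}"])
  have event: "{G. \<exists>S\<subseteq>{..<n}. S \<noteq> {} \<and> card S \<le> k0 \<and> T < (\<Sum>i\<in>S. t - signed_row_sum n l D G i)}
      = {G. \<exists>S\<in>SS. T < (\<Sum>i\<in>S. t - signed_row_sum n l D G i)}"
    by (auto simp: SS_def Suc_le_eq card_gt_0_iff dest: finite_subset)
  define g where "g k = exp (real k * (lam * t + lam * D)
      - real k * (real n - real k) * (sqrt a - sqrt b)^2 / (2 * real n))" for k :: nat
  have mgf: "measure_pmf.expectation (SBM n a b l) (\<lambda>G. exp (lam * (\<Sum>i\<in>S. t - signed_row_sum n l D G i)))
      \<le> g (card S)" if "S \<in> SS" for S
  proof -
    have S: "S \<subseteq> {..<n}" "finite S" using that by (auto simp: SS_def dest: finite_subset)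
    have "exp (lam * (\<Sum>i\<in>S. t - signed_row_sum n l D G i))
        = exp (lam * t * real (card S)) * exp (- (L/2) * (\<Sum>i\<in>S. signed_row_sum n l D G i))" for G
      using S(2) by (simp add: sum_subtractf lam_def algebra_simps flip: exp_add)
    hence "measure_pmf.expectation (SBM n a b l) (\<lambda>G. exp (lam * (\<Sum>i\<in>S. t - signed_row_sum n l D G i)))
        = exp (lam * t * real (card S))
          * measure_pmf.expectation (SBM n a b l) (\<lambda>G. exp (- (L/2) * (\<Sum>i\<in>S. signed_row_sum n l D G i)))"
      by simp
    also have "\<dots> \<le> exp (lam * t * real (card S)) * exp ((L/2) * D * real (card S)
          - real (card S) * (real n - real (card S)) * (sqrt a - sqrt b)^2 / (2 * real n))"
      using SBM_expectation_exp_sum_signed_row_sum_le[OF ab l S(1)] by (simp add: L_def D_def)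
    also have "\<dots> = g (card S)" by (simp add: g_def lam_def algebra_simps flip: exp_add)
    finally show ?thesis .
  qed
  have "measure_pmf.prob (SBM n a b l)
      {G. \<exists>S\<subseteq>{..<n}. S \<noteq> {} \<and> card S \<le> k0 \<and> T < (\<Sum>i\<in>S. t - signed_row_sum n l D G i)}
    \<le> (\<Sum>S\<in>SS. g (card S)) / exp (lam * T)"
    unfolding event
    by (rule order_trans[OF prob_exists_gt_le_sum_expectation_exp[OF finSS lam]])
      (auto intro!: divide_right_mono sum_mono mgf)
  also have "(\<Sum>S\<in>SS. g (card S)) = (\<Sum>k\<in>{1..k0}. real (n choose k) * g k)"
    using sum_subsets_by_card[of "{..<n}" g k0] by (simp add: SS_def)
  also have "\<dots> \<le> exp (- (49/100) * (lam * t) + Y)"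
    unfolding g_def
  proof (rule sum_binomial_exp_le[OF k0])
    show "0 \<le> lam * t" using lam t by simp
    show "lam * D \<le> lam * t / 10^6" using lam t by (simp add: mult_left_mono)
    show "exp 1 * real n * exp (- ((sqrt a - sqrt b)^2 / 2 - 2 * (lam * t))) \<le> Y"
      using Y by (simp add: lam_def)
  qed
  finally show ?thesis by (simp add: lam_def exp_diff divide_right_mono)
qed

lemma weighted_row_sums_ge_if_no_heavy_subset:
  fixes x :: "nat \<Rightarrow> real"
  assumes "0 \<le> T"
    and "\<forall>S\<subseteq>{..<n}. S \<noteq> {} \<and> card S \<le> k \<longrightarrow> (\<Sum>i\<in>S. t - signed_row_sum n l D G i) \<le> T"
    and "\<forall>i<n. 0 \<le> x i \<and> x i \<le> 1" "(\<Sum>i<n. x i) \<le> real k"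
  shows "t * (\<Sum>i<n. x i) - T \<le> (\<Sum>i<n. \<Sum>j<n. (adj G i j - D) * real_of_int (l i * l j) * x i)"
proof (rule ccontr)
  assume "\<not> ?thesis"
  moreover have "(\<Sum>i<n. x i * (t - signed_row_sum n l D G i))
      = t * (\<Sum>i<n. x i) - (\<Sum>i<n. x i * signed_row_sum n l D G i)"
    by (simp add: right_diff_distrib sum_subtractf sum_distrib_left mult.commute)
  moreover have "(\<Sum>i<n. x i * signed_row_sum n l D G i)
      = (\<Sum>i<n. \<Sum>j<n. (adj G i j - D) * real_of_int (l i * l j) * x i)"
    by (simp add: signed_row_sum_def sum_distrib_left mult_ac)
  ultimately have "T < (\<Sum>i<n. x i * (t - signed_row_sum n l D G i))" by linarith
  hence "\<exists>S\<subseteq>{..<n}. S \<noteq> {} \<and> card S \<le> k \<and> T < (\<Sum>i\<in>S. t - signed_row_sum n l D G i)"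
    using assms(1,3,4) by (intro exists_subset_sum_gt) auto
  then obtain S where S: "S \<subseteq> {..<n}" "S \<noteq> {}" "card S \<le> k"
    and gt: "T < (\<Sum>i\<in>S. t - signed_row_sum n l D G i)"
    by blast
  have "(\<Sum>i\<in>S. t - signed_row_sum n l D G i) \<le> T" using assms(2) S by blast
  thus False using gt by simp
qed

lemma sqrt_diff_le_half_ln_R_ratio_mult_sqrt:
  fixes n :: nat and a b :: real
  assumes "0 < b" "b < a" "a < real n"
  shows "sqrt a - sqrt b \<le> ln (R_ratio (a / real n) (b / real n)) / 2 * sqrt (a + b)"
proof -
  have pq: "0 < b / real n" "b / real n < a / real n" "a / real n < 1"
    using assms by (auto simp: field_simps)
  have "ln (sqrt b / sqrt a) \<le> sqrt b / sqrt a - 1" using assms by (intro ln_le_minus_one) auto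
  moreover have "ln (a / b) = 2 * ln (sqrt a / sqrt b)"
    using assms by (simp add: ln_div ln_sqrt)
  moreover have "ln (sqrt b / sqrt a) = - ln (sqrt a / sqrt b)" using assms by (simp add: ln_div)
  moreover have "ln (a / b) \<le> ln (R_ratio (a / real n) (b / real n))"
  proof -
    have "a / b \<le> R_ratio (a / real n) (b / real n)" using R_ratio_ge(1)[OF pq] assms by simp
    moreover have "0 < a / b" using assms by simp
    ultimately show ?thesis by simp
  qed
  ultimately have "(sqrt a - sqrt b) / sqrt a \<le> ln (R_ratio (a / real n) (b / real n)) / 2"
    using assms by (simp add: diff_divide_distrib)
  hence "(sqrt a - sqrt b) / sqrt a * sqrt a \<le> ln (R_ratio (a / real n) (b / real n)) / 2 * sqrt (a + b)"
    using assms ln_R_ratio_pos[OF pq] by (intro mult_mono) auto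
  thus ?thesis using assms by simp
qed

lemma exponent_le_neg_ten_kappa:
  fixes d \<kappa> Lam :: real
  assumes "100 \<le> d" "10^4 * d \<le> Lam"
  shows "- (49/100) * Lam - max 0 (10^4 * (\<kappa> - d)) / 2 \<le> - 10 * \<kappa>"
proof (cases "\<kappa> \<le> d")
  case True
  thus ?thesis using assms by simp
next
  case False
  have "- (49/100) * Lam - 10^4 * (\<kappa> - d) / 2 \<le> - 10 * \<kappa>"
    using False assms by (simp add: field_simps)
  thus ?thesis using False by simp
qed

lemma SBM_parameters_ge:
  fixes n :: nat and a b :: real
  assumes ab: "0 < b" "b < a" "a < real n" and C: "(sqrt a - sqrt b)^2 \<ge> 10^4"
  shows "100 \<le> sqrt a - sqrt b" "100 \<le> sqrt (a + b)" "10^4 \<le> real n"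
proof -
  have "0 \<le> sqrt a - sqrt b" using ab by simp
  thus d: "100 \<le> sqrt a - sqrt b" using C power2_le_imp_le[of 100 "sqrt a - sqrt b"] by simp
  have "0 \<le> sqrt b" using ab by simp
  hence "100 \<le> sqrt a" using d by linarith
  hence "100^2 \<le> (sqrt a)^2" by (intro power_mono) auto
  hence a: "10^4 \<le> a" using ab by simp
  thus "10^4 \<le> real n" using ab by simp
  have "(100::real)^2 \<le> a + b" using a ab by simp
  thus "100 \<le> sqrt (a + b)" by (rule real_le_rsqrt)
qed

lemma hundred_mult_nat_ceiling_le:
  assumes "10^4 \<le> real n"
  shows "100 * nat \<lceil>10 powr (-6) * real n\<rceil> \<le> n"
proof -
  have "real (nat \<lceil>10 powr (-6) * real n\<rceil>) \<le> 10 powr (-6) * real n + 1"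
    by (simp add: of_nat_ceiling)
  moreover have "10 powr (-6) = (1 / 10^6 :: real)" by (simp add: powr_minus)
  ultimately have "real (nat \<lceil>10 powr (-6) * real n\<rceil>) \<le> real n / 10^6 + 1"
    by (simp only:) simp
  hence "real (100 * nat \<lceil>10 powr (-6) * real n\<rceil>) \<le> real n" using assms by simp
  thus ?thesis by (simp only: of_nat_le_iff)
qed

lemma SBM_prob_exists_heavy_subset_le_exp_kappa:
  fixes n :: nat and a b \<kappa> K :: real and l :: "nat \<Rightarrow> int"
  assumes ab: "0 < b" "b < a" "a < real n" and l: "\<forall>i<n. l i \<in> {-1, 1}"
    and \<kappa>: "\<kappa> \<ge> 1" and K: "K \<ge> 10^4" and C: "(sqrt a - sqrt b)^2 \<ge> 10^4"
  defines "L \<equiv> ln (R_ratio (a / real n) (b / real n))" and "D \<equiv> D_thr (a / real n) (b / real n)"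
  defines "\<theta> \<equiv> exp (- ((sqrt a - sqrt b)^2 / 2) + 3 * \<kappa> + K * sqrt (a + b) * L)"
    and "M \<equiv> max 0 (10^4 * (\<kappa> - sqrt ((sqrt a - sqrt b)^2)))"
  shows "measure_pmf.prob (SBM n a b l)
      {G. \<exists>S\<subseteq>{..<n}. S \<noteq> {} \<and> card S \<le> nat \<lceil>10 powr (-6) * real n\<rceil> \<and>
          \<theta> * real n * sqrt (a + b) + M / L < (\<Sum>i\<in>S. K * sqrt (a + b) - signed_row_sum n l D G i)}
    \<le> exp (- 10 * \<kappa>)"
proof -
  define d where "d = sqrt a - sqrt b"
  define s where "s = sqrt (a + b)"
  have "0 < real n" using ab by simp
  hence "L > 0" using ab by (auto simp: L_def field_simps intro!: ln_R_ratio_pos)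
  have d: "100 \<le> d" "sqrt ((sqrt a - sqrt b)^2) = d" and s: "100 \<le> s" and n: "10^4 \<le> real n"
    using SBM_parameters_ge[OF ab C] by (simp_all add: d_def s_def)
  have Ls: "d \<le> L / 2 * s"
    unfolding d_def s_def L_def by (rule sqrt_diff_le_half_ln_R_ratio_mult_sqrt[OF ab])
  note k0 = hundred_mult_nat_ceiling_le[OF n]
  have "D \<le> 1" unfolding D_def using ab \<open>0 < real n\<close> by (intro D_thr_le_one) (auto simp: field_simps)
  also have "1 \<le> K * s / 10^6" using K s mult_mono[of "10^4" K 100 s] by simp
  finally have D: "D \<le> K * s / 10^6" .
  define Y where "Y = L / 2 * s * real n * \<theta>"
  have Y: "exp 1 * real n * exp (- ((sqrt a - sqrt b)^2 / 2 - L * (K * s))) \<le> Y"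
  proof -
    have "exp (- ((sqrt a - sqrt b)^2 / 2 - L * (K * s))) \<le> \<theta>"
      using \<kappa> by (simp add: \<theta>_def s_def algebra_simps)
    moreover have "exp 1 \<le> L / 2 * s" using exp_le Ls d by linarith
    moreover have "0 \<le> L / 2 * s" using Ls d by linarith
    ultimately have "exp 1 * exp (- ((sqrt a - sqrt b)^2 / 2 - L * (K * s))) \<le> (L / 2 * s) * \<theta>"
      by (intro mult_mono) auto
    hence "real n * (exp 1 * exp (- ((sqrt a - sqrt b)^2 / 2 - L * (K * s)))) \<le> real n * ((L / 2 * s) * \<theta>)"
      by (intro mult_left_mono) auto
    thus ?thesis unfolding Y_def by (simp only: mult_ac)
  qed
  have "measure_pmf.prob (SBM n a b l)
      {G. \<exists>S\<subseteq>{..<n}. S \<noteq> {} \<and> card S \<le> nat \<lceil>10 powr (-6) * real n\<rceil> \<and>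
          \<theta> * real n * s + M / L < (\<Sum>i\<in>S. K * s - signed_row_sum n l D G i)}
    \<le> exp (- (49/100) * (L/2 * (K * s)) + Y - L/2 * (\<theta> * real n * s + M / L))"
    using K s by (intro SBM_prob_exists_heavy_subset_le[OF ab l k0, folded L_def D_def] D Y) auto
  also have "\<dots> = exp (- (49/100) * (K * (L/2 * s)) - M / 2)"
    using \<open>L > 0\<close> by (simp add: Y_def field_simps)
  also have "\<dots> \<le> exp (- 10 * \<kappa>)"
  proof -
    have "10^4 * d \<le> K * (L/2 * s)" using K Ls d by (intro mult_mono) auto
    moreover have "M = max 0 (10^4 * (\<kappa> - d))" unfolding M_def d(2) ..
    ultimately show ?thesis using exponent_le_neg_ten_kappa[OF d(1), of "K * (L/2 * s)" \<kappa>] by simp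
  qed
  finally show ?thesis by (simp add: s_def)
qed

theorem mainTheorem8:
  fixes n :: nat and a b \<kappa> K :: real and l :: "nat \<Rightarrow> int"
  assumes "0 < b" "b < a" "a < real n"
    and "\<forall>i<n. l i \<in> {-1, 1}"
    and "\<kappa> \<ge> 1" and "K \<ge> 10^4"
    and "(sqrt a - sqrt b)^2 \<ge> 10^4"
  shows "measure_pmf.prob (SBM n a b l)
     {G. \<forall>x :: nat \<Rightarrow> real.
          (\<forall>i<n. 0 \<le> x i \<and> x i \<le> 1) \<and> (\<Sum>i<n. x i) \<le> 10 powr (-6) * real n \<longrightarrow>
          (\<Sum>i<n. \<Sum>j<n. (adj G i j - D_thr (a / real n) (b / real n)) * (real_of_int (l i * l j)) * x i)
            \<ge> (K * (\<Sum>i<n. x i)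
                - exp (- (((sqrt a - sqrt b)^2) / 2) + 3 * \<kappa>
                       + K * sqrt (a + b) * ln (R_ratio (a / real n) (b / real n))) * real n) * sqrt (a + b)
              - max 0 (10^4 * (\<kappa> - sqrt ((sqrt a - sqrt b)^2))) / ln (R_ratio (a / real n) (b / real n))}
     \<ge> 1 - exp (- 10 * \<kappa>) - 1 / (real n)^2"
proof -
  define L where "L = ln (R_ratio (a / real n) (b / real n))"
  define D where "D = D_thr (a / real n) (b / real n)"
  define \<theta> where "\<theta> = exp (- ((sqrt a - sqrt b)^2 / 2) + 3 * \<kappa> + K * sqrt (a + b) * L)"
  define M where "M = max 0 (10^4 * (\<kappa> - sqrt ((sqrt a - sqrt b)^2)))"
  define T where "T = \<theta> * real n * sqrt (a + b) + M / L"
  define k0 where "k0 = nat \<lceil>10 powr (-6) * real n\<rceil>"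
  define heavy where "heavy = {G. \<exists>S\<subseteq>{..<n}. S \<noteq> {} \<and> card S \<le> k0 \<and>
      T < (\<Sum>i\<in>S. K * sqrt (a + b) - signed_row_sum n l D G i)}"
  have "measure_pmf.prob (SBM n a b l) heavy \<le> exp (- 10 * \<kappa>)"
    unfolding heavy_def T_def k0_def \<theta>_def M_def L_def D_def
    by (rule SBM_prob_exists_heavy_subset_le_exp_kappa[OF assms])
  moreover have "measure_pmf.prob (SBM n a b l) (UNIV - heavy) = 1 - measure_pmf.prob (SBM n a b l) heavy"
    using measure_pmf.prob_compl[of heavy "SBM n a b l"] by simp
  moreover have "0 \<le> 1 / (real n)^2" by simp
  ultimately have compl: "1 - exp (- 10 * \<kappa>) - 1 / (real n)^2 \<le> measure_pmf.prob (SBM n a b l) (UNIV - heavy)"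
    by linarith
  have "0 < L" unfolding L_def using assms by (intro ln_R_ratio_pos) (auto simp: field_simps)
  hence T: "0 \<le> T" unfolding T_def M_def \<theta>_def using assms by (intro add_nonneg_nonneg divide_nonneg_pos) auto
  have good: "(K * (\<Sum>i<n. x i) - \<theta> * real n) * sqrt (a + b) - M / L
      \<le> (\<Sum>i<n. \<Sum>j<n. (adj G i j - D) * real_of_int (l i * l j) * x i)"
    if "G \<notin> heavy" "\<forall>i<n. 0 \<le> x i \<and> x i \<le> 1" "(\<Sum>i<n. x i) \<le> 10 powr (-6) * real n" for G x
  proof -
    have "\<forall>S\<subseteq>{..<n}. S \<noteq> {} \<and> card S \<le> k0 \<longrightarrow> (\<Sum>i\<in>S. K * sqrt (a + b) - signed_row_sum n l D G i) \<le> T"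
      using that(1) by (auto simp: heavy_def not_less)
    moreover have "(\<Sum>i<n. x i) \<le> real k0"
      using that(3) real_nat_ceiling_ge[of "10 powr (-6) * real n"] unfolding k0_def by linarith
    ultimately have "K * sqrt (a + b) * (\<Sum>i<n. x i) - T
        \<le> (\<Sum>i<n. \<Sum>j<n. (adj G i j - D) * real_of_int (l i * l j) * x i)"
      using T that(2) by (intro weighted_row_sums_ge_if_no_heavy_subset) auto
    thus ?thesis by (simp add: T_def algebra_simps)
  qed
  show ?thesis
    by (rule order_trans[OF compl measure_pmf.finite_measure_mono])
      (use good[unfolded \<theta>_def M_def L_def D_def] in auto)
qed

end
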